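(* Let $1\le n\le N-1$ and $Z_n=\frac1n\sum_{t=1}^n (X_t-\mu)$. For every $\lambda>0$, \[ \log \mathbb E \exp(\lambda n Z_n)\le \frac{(b-a)^2}{8}\,\lambda^2 (n+1)\Big(1-\frac nN\Big). \]
   Context: Let $N\ge 2$ and let $\mathcal X=(x_1,\dots,x_N)$ be a finite population of real numbers (repetitions allowed). Let $(X_1,\dots,X_N)=(x_{\pi(1)},\dots,x_{\pi(N)})$, where $\pi$ is a uniformly random permutation of $\{1,\dots,N\}$. For $n\le N$, $(X_1,\dots,X_n)$ is therefore a sample of size $n$ drawn uniformly without replacement from $\mathcal X$. Let $\mu=\frac1N\sum_{i=1}^N x_i$, $a=\min_i x_i$ and $b=\max_i x_i$. *)

theory Defs
  imports "HOL-Probability.Probability" "HOL-Combinatorics.Permutations"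
begin

definition unif_perm :: "nat \<Rightarrow> (nat \<Rightarrow> nat) pmf" where
  "unif_perm N = pmf_of_set {p. p permutes {..<N}}"

end

theory Submission
  imports Defs
begin

text \<open>
  With y i = x i - \<mu> and c = \<lambda>n, let E k be the sum, over all permutations \<pi> of {..<N},
  of exp (c * S k \<pi> / k), where S k \<pi> is the sum of the first k values y (\<pi> t); the
  expectation in question is E n / N!. Composing \<pi> with the transposition of j and k shows
  that E k is also the sum of exp (c * (S (k+1) \<pi> - y (\<pi> j)) / k), for every j \<le> k.
  Averaging over j and applying Hoeffding's lemma to the k + 1 centred values
  S (k+1) \<pi> / (k+1) - y (\<pi> j), which lie in an interval of length b - a, gives
  E k \<le> E (k+1) * exp (c^2 (b - a)^2 / (8 k^2)). Since S N \<pi> = 0 we have E N = N!, and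
  telescoping leaves the factor \<Sum>i=n..N-1. 1/i^2, which is at most (n+1)/n * (1/n - 1/N).
\<close>

lemma sum_exp_le_Hoeffding:
  fixes z :: "'a \<Rightarrow> real"
  assumes "finite J" and "s \<ge> 0" and "\<And>j. j \<in> J \<Longrightarrow> z j \<in> {l..u}"
    and "(\<Sum>j\<in>J. z j) = 0"
  shows "(\<Sum>j\<in>J. exp (s * z j)) \<le> card J * exp (s\<^sup>2 * (u - l)\<^sup>2 / 8)"
proof (cases "J = {} \<or> s = 0")
  case True
  then show ?thesis by auto
next
  case False
  then have J: "J \<noteq> {}" and s: "s > 0" using assms(2) by auto
  interpret interval_bounded_random_variable "measure_pmf (pmf_of_set J)" z l u
    by unfold_locales (use assms(1,3) J in \<open>auto simp: AE_measure_pmf_iff\<close>)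
  have "measure_pmf.expectation (pmf_of_set J) z = 0"
    by (simp add: integral_pmf_of_set[OF J assms(1)] assms(4))
  from Hoeffdings_lemma_nn_integral_0[OF s this]
  have "ennreal ((\<Sum>j\<in>J. exp (s * z j)) / card J) \<le> ennreal (exp (s\<^sup>2 * (u - l)\<^sup>2 / 8))"
    using assms(1) J
    by (simp add: nn_integral_pmf_of_set sum_ennreal ennreal_of_nat_eq_real_of_nat divide_ennreal
        card_gt_0_iff sum_nonneg)
  then show ?thesis
    using assms(1) J by (simp add: ennreal_le_iff field_simps card_gt_0_iff)
qed

lemma sum_exp_leave_one_out_le:
  fixes y :: "'a \<Rightarrow> real"
  assumes "finite J" and "card J = Suc k" and "k \<ge> 1" and "c \<ge> 0"
    and "\<And>j. j \<in> J \<Longrightarrow> y j \<in> {l..u}"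
  shows "(\<Sum>j\<in>J. exp (c * (sum y J - y j) / k))
    \<le> card J * exp (c * sum y J / card J + (c / k)\<^sup>2 * (u - l)\<^sup>2 / 8)"
proof -
  define m where "m = sum y J / card J"
  have shift: "c * (sum y J - y j) / k = c * sum y J / card J + c / k * (m - y j)" for j
  proof -
    have "real k > 0" using assms(3) by simp
    then show ?thesis unfolding m_def assms(2) of_nat_Suc by (simp add: divide_simps) algebra
  qed
  have "(\<Sum>j\<in>J. m - y j) = 0"
    using assms(2) by (simp add: m_def sum_subtractf)
  then have "(\<Sum>j\<in>J. exp (c / k * (m - y j))) \<le> card J * exp ((c / k)\<^sup>2 * ((m - l) - (m - u))\<^sup>2 / 8)"
    using assms by (intro sum_exp_le_Hoeffding) auto
  then have "exp (c * sum y J / card J) * (\<Sum>j\<in>J. exp (c / k * (m - y j)))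
      \<le> exp (c * sum y J / card J) * (card J * exp ((c / k)\<^sup>2 * (u - l)\<^sup>2 / 8))"
    by (intro mult_left_mono) auto
  then show ?thesis
    by (simp add: shift exp_add sum_distrib_left mult_ac)
qed

lemma sum_inverse_squares_le:
  assumes "1 \<le> n" and "n \<le> M"
  shows "(\<Sum>i\<in>{n..<M}. 1 / (real i)\<^sup>2) \<le> (real n + 1) / real n * (1 / real n - 1 / real M)"
  using assms(2)
proof (induction M rule: dec_induct)
  case base
  then show ?case by simp
next
  case (step M)
  have n: "real n \<ge> 1" and nM: "real n \<le> real M"
    using assms(1) step(1) by auto
  have "real n * real M * (real M + 1) \<le> (real n + 1) * (real M)\<^sup>2"
    using mult_right_mono[OF nM, of "real M"] by (simp add: power2_eq_square algebra_simps)
  then have "1 / (real M)\<^sup>2 \<le> (real n + 1) / (real n * real M * (real M + 1))"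
    using n nM by (simp add: divide_simps)
  also have "\<dots> = (real n + 1) / real n * (1 / real M - 1 / (real M + 1))"
    using n nM by (simp add: field_simps)
  finally have "1 / (real M)\<^sup>2 \<le> \<dots>" .
  with step.IH step(1) show ?case
    by (simp add: algebra_simps)
qed

lemma sum_lessThan_comp_transpose:
  fixes g :: "nat \<Rightarrow> 'a::ab_group_add"
  assumes "j \<le> k"
  shows "(\<Sum>t<k. g (Transposition.transpose j k t)) = (\<Sum>t<Suc k. g t) - g j"
proof -
  have "Transposition.transpose j k permutes {..<Suc k}"
    using assms by (intro permutes_swap_id) auto
  from sum.permute[OF this, of g] show ?thesis by simp
qed

definition perm_prefix_exp_sum :: "nat \<Rightarrow> (nat \<Rightarrow> real) \<Rightarrow> real \<Rightarrow> nat \<Rightarrow> real" where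
  "perm_prefix_exp_sum N y c k = (\<Sum>\<pi> | \<pi> permutes {..<N}. exp (c * (\<Sum>t<k. y (\<pi> t)) / k))"

lemma perm_prefix_exp_sum_drop:
  assumes "j \<le> k" and "k < N"
  shows "perm_prefix_exp_sum N y c k
    = (\<Sum>\<pi> | \<pi> permutes {..<N}. exp (c * ((\<Sum>t<Suc k. y (\<pi> t)) - y (\<pi> j)) / k))"
proof -
  have "Transposition.transpose j k permutes {..<N}"
    using assms by (intro permutes_swap_id) auto
  then have "perm_prefix_exp_sum N y c k
    = (\<Sum>\<pi> | \<pi> permutes {..<N}. exp (c * (\<Sum>t<k. y ((\<pi> \<circ> Transposition.transpose j k) t)) / k))"
    unfolding perm_prefix_exp_sum_def by (rule sum_permutations_compose_right)
  also have "\<dots> = (\<Sum>\<pi> | \<pi> permutes {..<N}. exp (c * ((\<Sum>t<Suc k. y (\<pi> t)) - y (\<pi> j)) / k))"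
    by (intro sum.cong) (simp_all add: sum_lessThan_comp_transpose[OF assms(1), of "\<lambda>t. y (_ t)"])
  finally show ?thesis .
qed

lemma perm_prefix_exp_sum_le_Suc:
  assumes "1 \<le> k" and "k < N" and "c \<ge> 0" and "\<And>i. i < N \<Longrightarrow> y i \<in> {l..u}"
  shows "perm_prefix_exp_sum N y c k
    \<le> perm_prefix_exp_sum N y c (Suc k) * exp ((c / k)\<^sup>2 * (u - l)\<^sup>2 / 8)"
proof -
  define P where "P = {\<pi>. \<pi> permutes {..<N}}"
  define D where "D = (c / k)\<^sup>2 * (u - l)\<^sup>2 / 8"
  have "real (Suc k) * perm_prefix_exp_sum N y c k = (\<Sum>j<Suc k. perm_prefix_exp_sum N y c k)"
    by simp
  also have "\<dots> = (\<Sum>j<Suc k. \<Sum>\<pi>\<in>P. exp (c * ((\<Sum>t<Suc k. y (\<pi> t)) - y (\<pi> j)) / k))"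
    using perm_prefix_exp_sum_drop[OF _ assms(2)] by (intro sum.cong) (simp_all add: P_def)
  also have "\<dots> = (\<Sum>\<pi>\<in>P. \<Sum>j<Suc k. exp (c * ((\<Sum>t<Suc k. y (\<pi> t)) - y (\<pi> j)) / k))"
    by (rule sum.swap)
  also have "\<dots> \<le> (\<Sum>\<pi>\<in>P. real (Suc k) * exp (c * (\<Sum>t<Suc k. y (\<pi> t)) / Suc k + D))"
  proof (rule sum_mono)
    fix \<pi> assume "\<pi> \<in> P"
    then have "y (\<pi> t) \<in> {l..u}" if "t < Suc k" for t
      using assms(2,4) that permutes_in_image[of \<pi> "{..<N}" t] by (auto simp: P_def)
    from sum_exp_leave_one_out_le[of "{..<Suc k}", OF _ _ assms(1,3) this]
    show "(\<Sum>j<Suc k. exp (c * ((\<Sum>t<Suc k. y (\<pi> t)) - y (\<pi> j)) / k))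
        \<le> real (Suc k) * exp (c * (\<Sum>t<Suc k. y (\<pi> t)) / Suc k + D)"
      by (simp add: D_def)
  qed
  also have "\<dots> = real (Suc k) * (perm_prefix_exp_sum N y c (Suc k) * exp D)"
    by (simp add: perm_prefix_exp_sum_def P_def exp_add sum_distrib_left sum_distrib_right)
  finally show ?thesis
    by (simp add: D_def del: of_nat_Suc)
qed

lemma perm_prefix_exp_sum_full:
  assumes "(\<Sum>i<N. y i) = 0"
  shows "perm_prefix_exp_sum N y c N = fact N"
proof -
  have "(\<Sum>t<N. y (\<pi> t)) = 0" if "\<pi> permutes {..<N}" for \<pi>
    using sum.permute[OF that, of y] assms by simp
  then show ?thesis
    by (simp add: perm_prefix_exp_sum_def card_permutations)
qed

lemma perm_prefix_exp_sum_le: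
  assumes "1 \<le> n" and "n \<le> N" and "c \<ge> 0" and "\<And>i. i < N \<Longrightarrow> y i \<in> {l..u}"
    and "(\<Sum>i<N. y i) = 0"
  shows "perm_prefix_exp_sum N y c n
    \<le> fact N * exp (c\<^sup>2 * (u - l)\<^sup>2 / 8 * (\<Sum>i\<in>{n..<N}. 1 / (real i)\<^sup>2))"
  using assms(2)
proof (induction n rule: inc_induct)
  case base
  then show ?case by (simp add: perm_prefix_exp_sum_full[OF assms(5)])
next
  case (step k)
  have "perm_prefix_exp_sum N y c k
      \<le> perm_prefix_exp_sum N y c (Suc k) * exp ((c / k)\<^sup>2 * (u - l)\<^sup>2 / 8)"
    using assms(1,3,4) step(1,2) by (intro perm_prefix_exp_sum_le_Suc) auto
  also have "\<dots> \<le> fact N * exp (c\<^sup>2 * (u - l)\<^sup>2 / 8 * (\<Sum>i\<in>{Suc k..<N}. 1 / (real i)\<^sup>2))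
      * exp ((c / k)\<^sup>2 * (u - l)\<^sup>2 / 8)"
    using step.IH by (rule mult_right_mono) simp
  also have "\<dots> = fact N * exp (c\<^sup>2 * (u - l)\<^sup>2 / 8 * (\<Sum>i\<in>{k..<N}. 1 / (real i)\<^sup>2))"
    using step(2) by (simp add: sum.atLeast_Suc_lessThan power_divide algebra_simps flip: exp_add)
  finally show ?case .
qed

theorem proposition4:
  fixes N n :: nat and x :: "nat \<Rightarrow> real" and lam :: real
  assumes "N \<ge> 2" and "1 \<le> n" and "n \<le> N - 1" and "lam > 0"
  defines "\<mu> \<equiv> (\<Sum>i<N. x i) / real N"
      and "a \<equiv> Min (x ` {..<N})"
      and "b \<equiv> Max (x ` {..<N})"
  shows "ln (measure_pmf.expectation (unif_perm N)
            (\<lambda>\<pi>. exp (lam * real n * ((1 / real n) * (\<Sum>t<n. x (\<pi> t) - \<mu>)))))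
         \<le> (b - a)^2 / 8 * lam^2 * (real n + 1) * (1 - real n / real N)"
proof -
  define E where "E = measure_pmf.expectation (unif_perm N)
    (\<lambda>\<pi>. exp (lam * real n * ((1 / real n) * (\<Sum>t<n. x (\<pi> t) - \<mu>))))"
  define y where "y i = x i - \<mu>" for i
  define D where "D = (lam * n)\<^sup>2 * (b - a)\<^sup>2 / 8"
  have y_range: "y i \<in> {a - \<mu>..b - \<mu>}" if "i < N" for i
    using that by (auto simp: y_def a_def b_def)
  have y_sum: "(\<Sum>i<N. y i) = 0"
    using assms(1) by (simp add: y_def sum_subtractf \<mu>_def)
  have perms: "{\<pi>. \<pi> permutes {..<N}} \<noteq> {}" "finite {\<pi>. \<pi> permutes {..<N}}"
    using permutes_id finite_permutations by blast+
  have E_eq: "E = perm_prefix_exp_sum N y (lam * n) n / fact N"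
    by (simp add: E_def unif_perm_def integral_pmf_of_set[OF perms] card_permutations
        perm_prefix_exp_sum_def y_def)
  have "0 < E"
    using perms by (simp add: E_eq perm_prefix_exp_sum_def sum_pos)
  moreover have "E \<le> exp (D * (\<Sum>i\<in>{n..<N}. 1 / (real i)\<^sup>2))"
    using perm_prefix_exp_sum_le[OF assms(2) _ _ y_range y_sum] assms
    by (simp add: E_eq D_def divide_le_eq mult.commute)
  ultimately have "ln E \<le> D * (\<Sum>i\<in>{n..<N}. 1 / (real i)\<^sup>2)"
    by (metis exp_gt_zero ln_exp ln_le_cancel_iff)
  also have "\<dots> \<le> D * ((real n + 1) / real n * (1 / real n - 1 / real N))"
    using assms by (intro mult_left_mono sum_inverse_squares_le) (auto simp: D_def)
  also have "\<dots> = (b - a)^2 / 8 * lam^2 * (real n + 1) * (1 - real n / real N)"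
    using assms by (simp add: D_def field_simps power2_eq_square)
  finally show ?thesis
    unfolding E_def .
qed

end
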